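(* Let $X$ be a complex vector space with $\dim_{\mathbb{C}}X\ge 2$ and $Y\neq\{0\}$ a sequentially complete Hausdorff complex locally convex space. Let $\Omega\subset X$ be a polygonally connected $2$-open set and $C\subset\Omega$ a subset such that $C-c$ is real-absorbing for some $c\in C$ (i.e. for every $x\in X$ there is $\varepsilon>0$ with $[0,\varepsilon]\cdot x\subset C-c$). Then for every $f\in\mathcal{H}_G(\Omega,Y)$, $$f(\Omega)-f(c)\subset\overline{\mathrm{span}}\big(f(C)-f(c)\big).$$ In particular $f\equiv0$ on $\Omega$ if and only if $f|_C\equiv 0$.
   Context: For $d\in\mathbb{N}^*$, $\Gamma_d(X)$ is the set of complex affine subspaces (linear varieties) $L\subset X$ of dimension $d$, each carrying its Euclidean topology, and $\Gamma_{1,d}(X)=\bigcup_{k=1}^d\Gamma_k(X)$. A set $A\subset X$ is $d$-open if $A\cap L$ is open in $L$ for every $L\in\Gamma_{1,d}(X)$. $A$ is polygonally connected if any two points of $A$ can be joined by a polygonal chain contained in $A$. For a $1$-open $\Omega\subset X$, a map $f:\Omega\to Y$ is Gâteaux holomorphic ($f\in\mathcal{H}_G(\Omega,Y)$) if for all $a\in\Omega$, $v\in X$, $\varphi\in Y^*$ there is $r>0$ such that $\lambda\mapsto\varphi(f(a+\lambda v))$ is holomorphic on the disc $\{|\lambda|<r\}$. $\overline{\mathrm{span}}$ denotes the closed linear span in $Y$. *)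

theory Defs
  imports "HOL-Analysis.Analysis"
begin

text \<open>Complex vector spaces are rendered with the library locale vector_space
  for an explicit scalar multiplication by complex numbers.\<close>

text \<open>Coordinate space C^k, realised inside nat => complex (product topology).\<close>
definition coord_space :: "nat \<Rightarrow> (nat \<Rightarrow> complex) set" where
  "coord_space k = {z. \<forall>i\<ge>k. z i = 0}"

definition is_frame :: "(complex \<Rightarrow> 'a \<Rightarrow> 'a::ab_group_add) \<Rightarrow> nat \<Rightarrow> (nat \<Rightarrow> 'a) \<Rightarrow> bool" where
  "is_frame sc k vs \<longleftrightarrow> inj_on vs {..<k} \<and> \<not> module.dependent sc (vs ` {..<k})"

definition aff_param :: "(complex \<Rightarrow> 'a \<Rightarrow> 'a::ab_group_add) \<Rightarrow> nat \<Rightarrow> 'a \<Rightarrow> (nat \<Rightarrow> 'a) \<Rightarrow> (nat \<Rightarrow> complex) \<Rightarrow> 'a" where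
  "aff_param sc k a vs z = a + (\<Sum>i<k. sc (z i) (vs i))"

definition Gamma :: "(complex \<Rightarrow> 'a \<Rightarrow> 'a::ab_group_add) \<Rightarrow> nat \<Rightarrow> 'a set set" where
  "Gamma sc k = {L. \<exists>a vs. is_frame sc k vs \<and> L = aff_param sc k a vs ` coord_space k}"

text \<open>A \<inter> L is open in L for its Euclidean topology (transported through an affine
  parametrisation; any two such parametrisations differ by a linear automorphism of C^k,
  hence a homeomorphism, so we require it for every parametrisation of L).\<close>
definition open_in_affine :: "(complex \<Rightarrow> 'a \<Rightarrow> 'a::ab_group_add) \<Rightarrow> nat \<Rightarrow> 'a set \<Rightarrow> 'a set \<Rightarrow> bool" where
  "open_in_affine sc k L A \<longleftrightarrow>
     (\<forall>a vs. is_frame sc k vs \<and> L = aff_param sc k a vs ` coord_space k \<longrightarrow>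
        openin (top_of_set (coord_space k)) {z \<in> coord_space k. aff_param sc k a vs z \<in> A})"

definition d_open :: "(complex \<Rightarrow> 'a \<Rightarrow> 'a::ab_group_add) \<Rightarrow> nat \<Rightarrow> 'a set \<Rightarrow> bool" where
  "d_open sc d A \<longleftrightarrow> (\<forall>k\<in>{1..d}. \<forall>L\<in>Gamma sc k. open_in_affine sc k L A)"

definition segm :: "(complex \<Rightarrow> 'a \<Rightarrow> 'a::ab_group_add) \<Rightarrow> 'a \<Rightarrow> 'a \<Rightarrow> 'a set" where
  "segm sc p q = {p + sc (complex_of_real t) (q - p) | t. t \<in> {0..1}}"

definition polygonally_connected :: "(complex \<Rightarrow> 'a \<Rightarrow> 'a::ab_group_add) \<Rightarrow> 'a set \<Rightarrow> bool" where
  "polygonally_connected sc A \<longleftrightarrow>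
     (\<forall>x\<in>A. \<forall>y\<in>A. \<exists>ps. ps \<noteq> [] \<and> hd ps = x \<and> last ps = y \<and>
        (\<forall>i. Suc i < length ps \<longrightarrow> segm sc (ps ! i) (ps ! Suc i) \<subseteq> A))"

definition real_absorbing :: "(complex \<Rightarrow> 'a \<Rightarrow> 'a::ab_group_add) \<Rightarrow> 'a set \<Rightarrow> bool" where
  "real_absorbing sc S \<longleftrightarrow>
     (\<forall>x. \<exists>\<epsilon>>0. \<forall>t\<in>{0..\<epsilon>}. sc (complex_of_real t) x \<in> S)"

definition convex_c :: "(complex \<Rightarrow> 'b \<Rightarrow> 'b::ab_group_add) \<Rightarrow> 'b set \<Rightarrow> bool" where
  "convex_c sc V \<longleftrightarrow> (\<forall>x\<in>V. \<forall>y\<in>V. \<forall>t\<in>{0..1::real}.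
      sc (complex_of_real (1 - t)) x + sc (complex_of_real t) y \<in> V)"

definition complex_tvs :: "(complex \<Rightarrow> 'b \<Rightarrow> 'b::{ab_group_add,topological_space}) \<Rightarrow> bool" where
  "complex_tvs sc \<longleftrightarrow> vector_space sc \<and>
     continuous_on UNIV (\<lambda>p::'b \<times> 'b. fst p + snd p) \<and>
     continuous_on UNIV (\<lambda>p::complex \<times> 'b. sc (fst p) (snd p))"

definition locally_convex :: "(complex \<Rightarrow> 'b \<Rightarrow> 'b::{ab_group_add,topological_space}) \<Rightarrow> bool" where
  "locally_convex sc \<longleftrightarrow>
     (\<forall>U. open U \<and> 0 \<in> U \<longrightarrow> (\<exists>V. open V \<and> convex_c sc V \<and> 0 \<in> V \<and> V \<subseteq> U))"

definition tvs_Cauchy :: "(nat \<Rightarrow> 'b::{ab_group_add,topological_space}) \<Rightarrow> bool" where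
  "tvs_Cauchy x \<longleftrightarrow> (\<forall>U. open U \<and> 0 \<in> U \<longrightarrow> (\<exists>N. \<forall>m\<ge>N. \<forall>n\<ge>N. x m - x n \<in> U))"

definition sequentially_complete :: "'b::{ab_group_add,topological_space} itself \<Rightarrow> bool" where
  "sequentially_complete _ \<longleftrightarrow> (\<forall>x::nat \<Rightarrow> 'b. tvs_Cauchy x \<longrightarrow> (\<exists>l. x \<longlonglongrightarrow> l))"

definition dual_space :: "(complex \<Rightarrow> 'b \<Rightarrow> 'b::{ab_group_add,topological_space}) \<Rightarrow> ('b \<Rightarrow> complex) set" where
  "dual_space sc = {\<phi>. Vector_Spaces.linear sc (*) \<phi> \<and> continuous_on UNIV \<phi>}"

definition gateaux_holomorphic ::
  "(complex \<Rightarrow> 'a \<Rightarrow> 'a::ab_group_add) \<Rightarrow> (complex \<Rightarrow> 'b \<Rightarrow> 'b::{ab_group_add,topological_space})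
    \<Rightarrow> 'a set \<Rightarrow> ('a \<Rightarrow> 'b) \<Rightarrow> bool" where
  "gateaux_holomorphic scaleX scaleY \<Omega> f \<longleftrightarrow>
     (\<forall>a\<in>\<Omega>. \<forall>v. \<forall>\<phi>\<in>dual_space scaleY. \<exists>r>0.
        (\<forall>w\<in>ball 0 r. a + scaleX w v \<in> \<Omega>) \<and>
        (\<lambda>w. \<phi> (f (a + scaleX w v))) holomorphic_on ball 0 r)"

end

theory Submission
  imports Defs "HOL-Complex_Analysis.Complex_Analysis"
begin

text \<open>If \<open>f x - f c\<close> lay outside the closed span, a continuous linear functional \<open>\<phi>\<close> on the
  locally convex space \<open>Y\<close> would separate it from the span (Hahn--Banach, via the Minkowski gauge
  of a convex neighbourhood of \<open>0\<close>). The scalar function \<open>h = \<phi> \<circ> f - \<phi> (f c)\<close> is holomorphic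
  on every complex line and vanishes on \<open>C\<close>. Since \<open>C - c\<close> is real-absorbing, the one-variable
  identity theorem makes \<open>h\<close> vanish near \<open>c\<close> on every complex line through \<open>c\<close>. This property
  propagates along each segment of a polygonal path: in the direction of the segment by analytic
  continuation, and in any other direction by doing the same on the nearby parallel segments,
  which stay in \<open>\<Omega>\<close> because \<open>\<Omega>\<close> meets complex planes in open sets. Hence \<open>h\<close> vanishes on \<open>\<Omega>\<close>,
  contradicting the choice of \<open>\<phi>\<close>.\<close>

section \<open>The Hahn--Banach extension theorem\<close>

text \<open>A real-linear functional on a subspace, dominated by \<open>p\<close>, encoded by its graph \<open>G\<close>
  (the subspace is \<open>fst ` G\<close>); graphs are ordered by inclusion, so Zorn's lemma applies directly.\<close>
definition dominated_linear_graph ::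
    "(real \<Rightarrow> 'b \<Rightarrow> 'b::ab_group_add) \<Rightarrow> ('b \<Rightarrow> real) \<Rightarrow> ('b \<times> real) set \<Rightarrow> bool" where
  "dominated_linear_graph sR p G \<longleftrightarrow>
     (\<forall>x r s. (x, r) \<in> G \<longrightarrow> (x, s) \<in> G \<longrightarrow> r = s) \<and>
     (\<forall>x r y s. (x, r) \<in> G \<longrightarrow> (y, s) \<in> G \<longrightarrow> (x + y, r + s) \<in> G) \<and>
     (\<forall>a x r. (x, r) \<in> G \<longrightarrow> (sR a x, a * r) \<in> G) \<and>
     (\<forall>x r. (x, r) \<in> G \<longrightarrow> r \<le> p x)"

lemma dominated_linear_graphD:
  assumes "dominated_linear_graph sR p G"
  shows dominated_linear_graph_unique: "(x, r) \<in> G \<Longrightarrow> (x, s) \<in> G \<Longrightarrow> r = s"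
    and dominated_linear_graph_add: "(x, r) \<in> G \<Longrightarrow> (y, s) \<in> G \<Longrightarrow> (x + y, r + s) \<in> G"
    and dominated_linear_graph_scale: "(x, r) \<in> G \<Longrightarrow> (sR a x, a * r) \<in> G"
    and dominated_linear_graph_le: "(x, r) \<in> G \<Longrightarrow> r \<le> p x"
  using assms unfolding dominated_linear_graph_def by blast+

lemma dominated_linear_graph_adjoin_coeff_unique:
  assumes vs: "vector_space sR" and G: "dominated_linear_graph sR p G" and x0: "x0 \<notin> fst ` G"
    and d: "(d1, r1) \<in> G" "(d2, r2) \<in> G" and eq: "d1 + sR t1 x0 = d2 + sR t2 x0"
  shows "t1 = t2"
proof (rule ccontr)
  interpret vector_space sR by (rule vs)
  note G = dominated_linear_graphD[OF G]
  assume ne: "t1 \<noteq> t2"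
  have "sR (t1 - t2) x0 = d2 - d1" using eq by (simp add: algebra_simps)
  hence "sR (inverse (t1 - t2)) (sR (t1 - t2) x0) = sR (inverse (t1 - t2)) (d2 - d1)" by simp
  hence "x0 = sR (inverse (t1 - t2)) (d2 - d1)" using ne by simp
  moreover have "(d2 - d1, r2 - r1) \<in> G" using G(2)[OF d(2) G(3)[OF d(1), of "-1"]] by simp
  ultimately have "(x0, inverse (t1 - t2) * (r2 - r1)) \<in> G" using G(3) by metis
  thus False using x0 by (metis fst_conv image_eqI)
qed

text \<open>The two bounds on \<open>c\<close> are exactly what domination requires on the positive and on the
  negative multiples of \<open>x0\<close>.\<close>
lemma dominated_linear_graph_adjoin_le:
  assumes vs: "vector_space sR"
    and hom: "\<And>t x. t > 0 \<Longrightarrow> p (sR t x) = t * p x"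
    and G: "dominated_linear_graph sR p G"
    and lower: "\<And>d r. (d, r) \<in> G \<Longrightarrow> r - p (d - x0) \<le> c"
    and upper: "\<And>d r. (d, r) \<in> G \<Longrightarrow> c \<le> p (d + x0) - r"
    and d: "(d, r) \<in> G"
  shows "r + t * c \<le> p (d + sR t x0)"
proof -
  interpret vector_space sR by (rule vs)
  note G = dominated_linear_graphD[OF G]
  consider "t = 0" | "t > 0" | "t < 0" by linarith
  thus ?thesis
  proof cases
    case 1 thus ?thesis using d G(4) by simp
  next
    case 2
    have "t * c \<le> t * (p (sR (inverse t) d + x0) - inverse t * r)"
      using upper[OF G(3)[OF d]] 2 by (simp add: mult_left_mono)
    also have "\<dots> = p (sR t (sR (inverse t) d + x0)) - r"
      using 2 hom[OF 2] by (simp add: right_diff_distrib)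
    also have "sR t (sR (inverse t) d + x0) = d + sR t x0" using 2 by (simp add: algebra_simps)
    finally show ?thesis by simp
  next
    case 3
    define s where "s = - t"
    have s: "s > 0" using 3 by (simp add: s_def)
    have x: "d + sR t x0 = sR s (sR (inverse s) d - x0)" using s by (simp add: s_def algebra_simps)
    have "r - p (d + sR t x0) = s * (inverse s * r - p (sR (inverse s) d - x0))"
      unfolding x hom[OF s] using s by (simp add: algebra_simps)
    also have "\<dots> \<le> s * c" using lower[OF G(3)[OF d]] s by (simp add: mult_left_mono)
    finally show ?thesis by (simp add: s_def)
  qed
qed

lemma dominated_linear_graph_adjoin:
  assumes vs: "vector_space sR"
    and hom: "\<And>t x. t > 0 \<Longrightarrow> p (sR t x) = t * p x"
    and G: "dominated_linear_graph sR p G"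
    and x0: "x0 \<notin> fst ` G"
    and lower: "\<And>d r. (d, r) \<in> G \<Longrightarrow> r - p (d - x0) \<le> c"
    and upper: "\<And>d r. (d, r) \<in> G \<Longrightarrow> c \<le> p (d + x0) - r"
  shows "dominated_linear_graph sR p {(d + sR t x0, r + t * c) | d r t. (d, r) \<in> G}"
    (is "dominated_linear_graph sR p ?G'")
proof -
  interpret vector_space sR by (rule vs)
  note G' = dominated_linear_graphD[OF G]
  show ?thesis
    unfolding dominated_linear_graph_def
  proof (intro conjI allI impI)
    fix x r s assume "(x, r) \<in> ?G'" "(x, s) \<in> ?G'"
    then obtain d1 r1 t1 d2 r2 t2 where h: "(d1, r1) \<in> G" "(d2, r2) \<in> G" "x = d1 + sR t1 x0"
      "r = r1 + t1 * c" "x = d2 + sR t2 x0" "s = r2 + t2 * c" by blast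
    have "t1 = t2"
      using dominated_linear_graph_adjoin_coeff_unique[OF vs G x0 h(1,2)] h(3,5) by simp
    thus "r = s" using h G'(1) by auto
  next
    fix x r y s assume "(x, r) \<in> ?G'" "(y, s) \<in> ?G'"
    then obtain d1 r1 t1 d2 r2 t2 where h: "(d1, r1) \<in> G" "(d2, r2) \<in> G" "x = d1 + sR t1 x0"
      "r = r1 + t1 * c" "y = d2 + sR t2 x0" "s = r2 + t2 * c" by blast
    have "x + y = (d1 + d2) + sR (t1 + t2) x0" "r + s = (r1 + r2) + (t1 + t2) * c"
      using h by (simp_all add: algebra_simps)
    thus "(x + y, r + s) \<in> ?G'" using G'(2)[OF h(1,2)] by blast
  next
    fix a x r assume "(x, r) \<in> ?G'"
    then obtain d r1 t where h: "(d, r1) \<in> G" "x = d + sR t x0" "r = r1 + t * c" by blast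
    have "sR a x = sR a d + sR (a * t) x0" "a * r = a * r1 + (a * t) * c"
      using h by (simp_all add: algebra_simps)
    thus "(sR a x, a * r) \<in> ?G'" using G'(3)[OF h(1)] by blast
  next
    fix x r assume "(x, r) \<in> ?G'"
    then obtain d r1 t where "(d, r1) \<in> G" "x = d + sR t x0" "r = r1 + t * c" by blast
    thus "r \<le> p x" using dominated_linear_graph_adjoin_le[OF vs hom G lower upper] by blast
  qed
qed

lemma dominated_linear_graph_extend:
  assumes vs: "vector_space sR"
    and sub: "\<And>x y. p (x + y) \<le> p x + p y"
    and hom: "\<And>t x. t > 0 \<Longrightarrow> p (sR t x) = t * p x"
    and G: "dominated_linear_graph sR p G" and ne: "G \<noteq> {}"
    and x0: "x0 \<notin> fst ` G"
  shows "\<exists>G'. dominated_linear_graph sR p G' \<and> G \<subset> G'"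
proof -
  interpret vector_space sR by (rule vs)
  note G' = dominated_linear_graphD[OF G]
  obtain z r where "(z, r) \<in> G" using ne by auto
  hence zero: "(0, 0) \<in> G" using G'(3)[of z r 0] by simp
  have gap: "r1 - p (d1 - x0) \<le> p (d2 + x0) - r2" if "(d1, r1) \<in> G" "(d2, r2) \<in> G" for d1 r1 d2 r2
  proof -
    have "r1 + r2 \<le> p ((d1 - x0) + (d2 + x0))" using G'(4)[OF G'(2)[OF that]] by simp
    also have "\<dots> \<le> p (d1 - x0) + p (d2 + x0)" by (rule sub)
    finally show ?thesis by simp
  qed
  define A where "A = {r - p (d - x0) | d r. (d, r) \<in> G}"
  have "A \<noteq> {}" using zero unfolding A_def by blast
  have "bdd_above A" unfolding A_def bdd_above_def using gap[OF _ zero] by auto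
  have lower: "r - p (d - x0) \<le> Sup A" and upper: "Sup A \<le> p (d + x0) - r"
    if "(d, r) \<in> G" for d r
  proof -
    show "r - p (d - x0) \<le> Sup A" using that \<open>bdd_above A\<close> by (intro cSup_upper) (auto simp: A_def)
    show "Sup A \<le> p (d + x0) - r" using that \<open>A \<noteq> {}\<close> by (intro cSup_least) (auto simp: A_def intro: gap)
  qed
  define G'' where "G'' = {(d + sR t x0, r + t * Sup A) | d r t. (d, r) \<in> G}"
  have "dominated_linear_graph sR p G''"
    unfolding G''_def using dominated_linear_graph_adjoin[OF vs hom G x0 lower upper] .
  moreover have "G \<subseteq> G''"
  proof
    fix z assume "z \<in> G"
    moreover have "z = (fst z + sR 0 x0, snd z + 0 * Sup A)" by simp
    ultimately show "z \<in> G''" unfolding G''_def by (metis (mono_tags, lifting) mem_Collect_eq prod.collapse)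
  qed
  moreover have "(x0, Sup A) \<in> G''"
  proof -
    have "(x0, Sup A) = (0 + sR 1 x0, 0 + 1 * Sup A)" by simp
    thus ?thesis unfolding G''_def using zero by blast
  qed
  moreover have "G'' \<noteq> G" using \<open>(x0, Sup A) \<in> G''\<close> x0 by (metis fst_conv image_eqI)
  ultimately show ?thesis by blast
qed

lemma dominated_linear_graph_chain_Union:
  assumes C: "C \<in> chains {G. dominated_linear_graph sR p G \<and> G0 \<subseteq> G}" and ne: "C \<noteq> {}"
  shows "\<Union>C \<in> {G. dominated_linear_graph sR p G \<and> G0 \<subseteq> G}"
proof -
  have lg: "\<And>G. G \<in> C \<Longrightarrow> dominated_linear_graph sR p G"
    and G0: "\<And>G. G \<in> C \<Longrightarrow> G0 \<subseteq> G"
    and chain: "\<And>X Y. X \<in> C \<Longrightarrow> Y \<in> C \<Longrightarrow> X \<subseteq> Y \<or> Y \<subseteq> X"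
    using C unfolding chains_def chain_subset_def by blast+
  have common: "\<exists>G\<in>C. (x, r) \<in> G \<and> (y, s) \<in> G" if xr: "(x, r) \<in> \<Union>C" and ys: "(y, s) \<in> \<Union>C" for x r y s
  proof -
    obtain X Y where "X \<in> C" "Y \<in> C" "(x, r) \<in> X" "(y, s) \<in> Y" using xr ys by blast
    thus ?thesis using chain[of X Y] by blast
  qed
  have "dominated_linear_graph sR p (\<Union>C)"
    unfolding dominated_linear_graph_def
  proof (intro conjI allI impI)
    fix x r s assume "(x, r) \<in> \<Union>C" "(x, s) \<in> \<Union>C"
    then obtain G where "G \<in> C" "(x, r) \<in> G" "(x, s) \<in> G" using common by blast
    thus "r = s" using lg dominated_linear_graph_unique by blast
  next
    fix x r y s assume "(x, r) \<in> \<Union>C" "(y, s) \<in> \<Union>C"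
    then obtain G where "G \<in> C" "(x, r) \<in> G" "(y, s) \<in> G" using common by blast
    thus "(x + y, r + s) \<in> \<Union>C" using lg dominated_linear_graph_add by blast
  next
    fix a x r assume "(x, r) \<in> \<Union>C"
    thus "(sR a x, a * r) \<in> \<Union>C" using lg dominated_linear_graph_scale by blast
  next
    fix x r assume "(x, r) \<in> \<Union>C"
    thus "r \<le> p x" using lg dominated_linear_graph_le by blast
  qed
  moreover obtain G where "G \<in> C" using ne by blast
  hence "G0 \<subseteq> \<Union>C" using G0 by blast
  ultimately show ?thesis by simp
qed

theorem Hahn_Banach_graph:
  assumes vs: "vector_space sR"
    and sub: "\<And>x y. p (x + y) \<le> p x + p y"
    and hom: "\<And>t x. t > 0 \<Longrightarrow> p (sR t x) = t * p x"
    and G0: "dominated_linear_graph sR p G0" and ne: "G0 \<noteq> {}"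
  obtains \<psi> where "\<And>x y. \<psi> (x + y) = \<psi> x + \<psi> y" "\<And>a x. \<psi> (sR a x) = a * \<psi> x"
    "\<And>x. \<psi> x \<le> p x" "\<And>x r. (x, r) \<in> G0 \<Longrightarrow> \<psi> x = r"
proof -
  define A where "A = {G. dominated_linear_graph sR p G \<and> G0 \<subseteq> G}"
  have "\<forall>C\<in>chains A. \<exists>U\<in>A. \<forall>X\<in>C. X \<subseteq> U"
  proof
    fix C assume C: "C \<in> chains A"
    show "\<exists>U\<in>A. \<forall>X\<in>C. X \<subseteq> U"
    proof (cases "C = {}")
      case True thus ?thesis using G0 unfolding A_def by blast
    next
      case False
      hence "\<Union>C \<in> A" using dominated_linear_graph_chain_Union C unfolding A_def by blast
      thus ?thesis by blast
    qed
  qed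
  from Zorn_Lemma2[OF this] obtain M where M: "M \<in> A" and max: "\<And>X. X \<in> A \<Longrightarrow> M \<subseteq> X \<Longrightarrow> X = M"
    by blast
  have lM: "dominated_linear_graph sR p M" and G0M: "G0 \<subseteq> M" using M unfolding A_def by auto
  note M' = dominated_linear_graphD[OF lM]
  have total: "x \<in> fst ` M" for x
  proof (rule ccontr)
    assume "x \<notin> fst ` M"
    moreover have "M \<noteq> {}" using ne G0M by blast
    ultimately obtain G' where "dominated_linear_graph sR p G'" "M \<subset> G'"
      using dominated_linear_graph_extend[OF vs sub hom lM] by blast
    moreover from this have "G' \<in> A" using G0M unfolding A_def by blast
    ultimately show False using max[of G'] by blast
  qed
  define \<psi> where "\<psi> x = (THE r. (x, r) \<in> M)" for x
  have graph: "(x, \<psi> x) \<in> M" for x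
  proof -
    obtain r where r: "(x, r) \<in> M" using total[of x] by force
    show ?thesis unfolding \<psi>_def by (rule theI[of _ r]) (use r M'(1) in blast)+
  qed
  have graph_eq: "\<psi> x = r" if "(x, r) \<in> M" for x r using M'(1)[OF graph that] .
  show ?thesis
  proof (rule that)
    show "\<psi> (x + y) = \<psi> x + \<psi> y" for x y using graph_eq[OF M'(2)[OF graph graph]] .
    show "\<psi> (sR a x) = a * \<psi> x" for a x using graph_eq[OF M'(3)[OF graph]] .
    show "\<psi> x \<le> p x" for x using M'(4)[OF graph] .
    show "\<psi> x = r" if "(x, r) \<in> G0" for x r using graph_eq that G0M by blast
  qed
qed

section \<open>The Minkowski gauge of a convex absorbing set\<close>

locale convex_absorbing = vector_space sR
  for sR :: "real \<Rightarrow> 'b \<Rightarrow> 'b::ab_group_add" +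
  fixes V :: "'b set"
  assumes convex: "\<lbrakk>x \<in> V; y \<in> V; 0 \<le> t; t \<le> 1\<rbrakk> \<Longrightarrow> sR (1 - t) x + sR t y \<in> V"
    and zero_mem: "0 \<in> V"
    and absorbing: "\<exists>t>0. sR t z \<in> V"
begin

definition gauge_scales :: "'b \<Rightarrow> real set" where
  "gauge_scales z = {t. 0 < t \<and> sR (inverse t) z \<in> V}"

definition gauge :: "'b \<Rightarrow> real" where
  "gauge z = Inf (gauge_scales z)"

lemma gauge_scales_nonempty: "gauge_scales z \<noteq> {}"
proof -
  obtain t where "t > 0" "sR t z \<in> V" using absorbing by blast
  hence "inverse t \<in> gauge_scales z" unfolding gauge_scales_def by simp
  thus ?thesis by blast
qed

lemma bdd_below_gauge_scales: "bdd_below (gauge_scales z)"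
  unfolding gauge_scales_def bdd_below_def by (auto intro: less_imp_le)

lemma gauge_scales_upward_closed:
  assumes "t \<in> gauge_scales z" "t \<le> t'"
  shows "t' \<in> gauge_scales z"
proof -
  have t: "t > 0" "sR (inverse t) z \<in> V" using assms(1) unfolding gauge_scales_def by auto
  have "sR (1 - t / t') 0 + sR (t / t') (sR (inverse t) z) \<in> V"
    using convex[OF zero_mem t(2), of "t / t'"] t assms(2) by simp
  also have "sR (1 - t / t') 0 + sR (t / t') (sR (inverse t) z) = sR (inverse t') z"
    using t by (simp add: field_simps)
  finally show ?thesis using t assms(2) unfolding gauge_scales_def by simp
qed

lemma gauge_le: "t \<in> gauge_scales z \<Longrightarrow> gauge z \<le> t"
  unfolding gauge_def by (rule cInf_lower[OF _ bdd_below_gauge_scales])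

lemma le_gauge: "(\<And>t. t \<in> gauge_scales z \<Longrightarrow> s \<le> t) \<Longrightarrow> s \<le> gauge z"
  unfolding gauge_def using gauge_scales_nonempty by (rule cInf_greatest)

lemma gauge_nonneg: "0 \<le> gauge z"
  by (rule le_gauge) (simp add: gauge_scales_def)

lemma gauge_le_one: "z \<in> V \<Longrightarrow> gauge z \<le> 1"
  by (rule gauge_le) (simp add: gauge_scales_def)

lemma mem_if_gauge_less_one: "gauge z < 1 \<Longrightarrow> z \<in> V"
proof -
  assume "gauge z < 1"
  then obtain t where "t \<in> gauge_scales z" "t < 1"
    unfolding gauge_def using gauge_scales_nonempty cInf_lessD by blast
  hence "1 \<in> gauge_scales z" using gauge_scales_upward_closed by fastforce
  thus "z \<in> V" unfolding gauge_scales_def by simp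
qed

lemma gauge_subadditive: "gauge (x + y) \<le> gauge x + gauge y"
proof -
  have sum: "s + t \<in> gauge_scales (x + y)" if "s \<in> gauge_scales x" "t \<in> gauge_scales y" for s t
  proof -
    have s: "s > 0" "sR (inverse s) x \<in> V" and t: "t > 0" "sR (inverse t) y \<in> V"
      using that unfolding gauge_scales_def by auto
    have "sR (1 - t / (s + t)) (sR (inverse s) x) + sR (t / (s + t)) (sR (inverse t) y) \<in> V"
      using convex[OF s(2) t(2), of "t / (s + t)"] s t by simp
    also have "sR (1 - t / (s + t)) (sR (inverse s) x) + sR (t / (s + t)) (sR (inverse t) y)
        = sR (inverse (s + t)) (x + y)"
      using s t by (simp add: field_simps scale_right_distrib)
    finally show ?thesis using s t unfolding gauge_scales_def by simp
  qed
  have "gauge (x + y) - t \<le> gauge x" if t: "t \<in> gauge_scales y" for t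
  proof (rule le_gauge)
    fix s assume "s \<in> gauge_scales x"
    thus "gauge (x + y) - t \<le> s" using gauge_le[OF sum[OF _ t]] by fastforce
  qed
  hence "gauge (x + y) - gauge x \<le> gauge y"
    by (intro le_gauge) (auto simp: algebra_simps)
  thus ?thesis by simp
qed

lemma gauge_pos_homogeneous:
  assumes t: "t > 0"
  shows "gauge (sR t x) = t * gauge x"
proof -
  have le: "gauge (sR t x) \<le> t * gauge x" if t: "t > 0" for t x
  proof -
    have "gauge (sR t x) / t \<le> gauge x"
    proof (rule le_gauge)
      fix s assume "s \<in> gauge_scales x"
      hence "t * s \<in> gauge_scales (sR t x)" using t unfolding gauge_scales_def by (simp add: field_simps)
      hence "gauge (sR t x) \<le> t * s" by (rule gauge_le)
      thus "gauge (sR t x) / t \<le> s" using t by (simp add: divide_simps mult.commute)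
    qed
    thus ?thesis using t by (simp add: divide_simps mult.commute)
  qed
  have "gauge x = gauge (sR (inverse t) (sR t x))" using t by simp
  also have "\<dots> \<le> inverse t * gauge (sR t x)" using le[of "inverse t" "sR t x"] t by simp
  finally have "t * gauge x \<le> gauge (sR t x)" using t by (simp add: field_simps)
  thus ?thesis using le[OF t, of x] by simp
qed

end

section \<open>Continuous linear functionals on a locally convex space\<close>

lemma complex_tvs_vector_space: "complex_tvs sc \<Longrightarrow> vector_space sc"
  unfolding complex_tvs_def by blast

lemma complex_tvs_continuous_scale_left:
  fixes sc :: "complex \<Rightarrow> 'b \<Rightarrow> 'b::{ab_group_add,topological_space}"
  assumes "complex_tvs sc"
  shows "continuous_on UNIV (\<lambda>k. sc k z)"
proof -
  have scale: "continuous_on UNIV (\<lambda>p::complex \<times> 'b. sc (fst p) (snd p))"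
    using assms unfolding complex_tvs_def by blast
  show ?thesis
    by (rule continuous_on_compose2[OF scale, of UNIV "\<lambda>k. (k, z)", simplified]) (auto intro!: continuous_intros)
qed

lemma complex_tvs_continuous_scale:
  fixes sc :: "complex \<Rightarrow> 'b \<Rightarrow> 'b::{ab_group_add,topological_space}"
  assumes "complex_tvs sc"
  shows "continuous_on UNIV (\<lambda>z. sc k z)"
proof -
  have scale: "continuous_on UNIV (\<lambda>p::complex \<times> 'b. sc (fst p) (snd p))"
    using assms unfolding complex_tvs_def by blast
  show ?thesis
    by (rule continuous_on_compose2[OF scale, of UNIV "\<lambda>z. (k, z)", simplified]) (auto intro!: continuous_intros)
qed

lemma complex_tvs_continuous_affine:
  fixes sc :: "complex \<Rightarrow> 'b \<Rightarrow> 'b::{ab_group_add,topological_space}"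
  assumes "complex_tvs sc"
  shows "continuous_on UNIV (\<lambda>z. a + sc k z)"
proof -
  have add: "continuous_on UNIV (\<lambda>p::'b \<times> 'b. fst p + snd p)"
    using assms unfolding complex_tvs_def by blast
  show ?thesis
    using complex_tvs_continuous_scale[OF assms, of k]
    by (intro continuous_on_compose2[OF add, of UNIV "\<lambda>z. (a, sc k z)", simplified]) (auto intro!: continuous_intros)
qed

lemma complex_tvs_open_absorbing:
  assumes "complex_tvs sc" "open V" "0 \<in> V"
  shows "\<exists>t>0. sc (complex_of_real t) z \<in> V"
proof -
  interpret vector_space sc using assms(1) by (rule complex_tvs_vector_space)
  have "open ((\<lambda>k. sc k z) -` V)"
    using open_vimage[OF assms(2) complex_tvs_continuous_scale_left[OF assms(1)]] by simp
  moreover have "0 \<in> (\<lambda>k. sc k z) -` V" using assms(3) by simp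
  ultimately obtain e where "e > 0" "ball 0 e \<subseteq> (\<lambda>k. sc k z) -` V"
    using open_contains_ball by blast
  moreover have "complex_of_real (e / 2) \<in> ball 0 e" using \<open>e > 0\<close> by simp
  ultimately have "sc (complex_of_real (e / 2)) z \<in> V" by blast
  thus ?thesis using \<open>e > 0\<close> by (intro exI[of _ "e / 2"]) simp
qed

lemma vector_space_real_scale: "vector_space sc \<Longrightarrow> vector_space (\<lambda>r. sc (complex_of_real r))"
  unfolding vector_space_def module_def
  by (simp add: scale_right_distrib scale_left_distrib)

text \<open>Boundedness above on a neighbourhood suffices since \<open>\<psi> (- w) = - \<psi> w\<close>.\<close>
lemma real_linear_functional_continuous:
  fixes sc :: "complex \<Rightarrow> 'b \<Rightarrow> 'b::{ab_group_add,topological_space}"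
  assumes tvs: "complex_tvs sc"
    and add: "\<And>x y. \<psi> (x + y) = \<psi> x + \<psi> y"
    and scale: "\<And>a x. \<psi> (sc (complex_of_real a) x) = a * \<psi> x"
    and V: "open V" "0 \<in> V" and bound: "\<And>w. w \<in> V \<Longrightarrow> \<psi> w \<le> 1"
  shows "continuous_on UNIV \<psi>"
proof -
  interpret vector_space sc using tvs by (rule complex_tvs_vector_space)
  have neg: "\<psi> (- w) = - \<psi> w" for w using scale[of "-1" w] by simp
  have "open (\<psi> -` T)" if T: "open T" for T
    unfolding open_subopen[of "\<psi> -` T"]
  proof
    fix z0 assume "z0 \<in> \<psi> -` T"
    then obtain e where e: "e > 0" "ball (\<psi> z0) e \<subseteq> T" using T open_contains_ball by blast
    define a where "a = complex_of_real (2 / e)"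
    define W where "W = (\<lambda>z. - sc a z0 + sc a z) -` (V \<inter> (\<lambda>z. 0 + sc (-1) z) -` V)"
    have "open W" unfolding W_def
      by (intro open_vimage open_Int V(1) complex_tvs_continuous_affine[OF tvs])
    moreover have "z0 \<in> W" unfolding W_def using V(2) by simp
    moreover have "W \<subseteq> \<psi> -` T"
    proof
      fix z assume "z \<in> W"
      have "- sc a z0 + sc a z = sc (complex_of_real (2 / e)) (z - z0)"
        unfolding a_def by (simp add: scale_right_diff_distrib)
      hence "sc (complex_of_real (2 / e)) (z - z0) \<in> V" "- sc (complex_of_real (2 / e)) (z - z0) \<in> V"
        using \<open>z \<in> W\<close> unfolding W_def by auto
      hence "\<bar>2 / e * \<psi> (z - z0)\<bar> \<le> 1" using bound scale neg by (metis abs_le_iff minus_le_iff)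
      hence "\<bar>\<psi> z - \<psi> z0\<bar> < e" using e(1) add[of "z - z0" z0] by (simp add: abs_mult field_simps)
      thus "z \<in> \<psi> -` T" using e(2) by (auto simp: dist_real_def abs_minus_commute)
    qed
    ultimately show "\<exists>W. open W \<and> z0 \<in> W \<and> W \<subseteq> \<psi> -` T" by blast
  qed
  thus ?thesis by (simp add: continuous_on_open_vimage)
qed

lemma complexified_functional_in_dual_space:
  fixes sc :: "complex \<Rightarrow> 'b \<Rightarrow> 'b::{ab_group_add,topological_space}"
  assumes tvs: "complex_tvs sc"
    and add: "\<And>x y. \<psi> (x + y) = \<psi> x + \<psi> y"
    and scale: "\<And>a x. \<psi> (sc (complex_of_real a) x) = a * \<psi> x"
    and cont: "continuous_on UNIV \<psi>"
  shows "(\<lambda>z. complex_of_real (\<psi> z) - \<i> * complex_of_real (\<psi> (sc \<i> z))) \<in> dual_space sc"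
proof -
  interpret vector_space sc using tvs by (rule complex_tvs_vector_space)
  define \<phi> where "\<phi> z = complex_of_real (\<psi> z) - \<i> * complex_of_real (\<psi> (sc \<i> z))" for z
  have phi_add: "\<phi> (x + z) = \<phi> x + \<phi> z" for x z
    unfolding \<phi>_def by (simp add: scale_right_distrib add algebra_simps)
  have i_real: "sc \<i> (sc (complex_of_real a) x) = sc (complex_of_real a) (sc \<i> x)" for a x
    by (simp add: mult.commute)
  have phi_real: "\<phi> (sc (complex_of_real a) x) = complex_of_real a * \<phi> x" for a x
    unfolding \<phi>_def i_real scale by (simp add: algebra_simps)
  have i_i: "sc \<i> (sc \<i> x) = sc (complex_of_real (-1)) x" for x by simp
  have phi_i: "\<phi> (sc \<i> x) = \<i> * \<phi> x" for x
    unfolding \<phi>_def i_i scale by (simp add: algebra_simps)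
  have phi_scale: "\<phi> (sc c x) = c * \<phi> x" for c x
  proof -
    have "sc c x = sc (complex_of_real (Re c) + \<i> * complex_of_real (Im c)) x"
      using complex_eq[of c] by simp
    also have "\<dots> = sc (complex_of_real (Re c)) x + sc \<i> (sc (complex_of_real (Im c)) x)"
      by (simp add: scale_left_distrib)
    finally have "\<phi> (sc c x) = complex_of_real (Re c) * \<phi> x + \<i> * (complex_of_real (Im c) * \<phi> x)"
      by (simp only: phi_add phi_i phi_real)
    also have "\<dots> = (complex_of_real (Re c) + \<i> * complex_of_real (Im c)) * \<phi> x"
      by (simp add: algebra_simps)
    also have "\<dots> = c * \<phi> x" using complex_eq[of c] by simp
    finally show ?thesis .
  qed
  have "Vector_Spaces.linear sc (*) \<phi>"
    unfolding Vector_Spaces.linear_def module_hom_def module_hom_axioms_def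
  proof (intro conjI allI)
    show "vector_space sc" by (rule complex_tvs_vector_space[OF tvs])
    show "vector_space ((*) :: complex \<Rightarrow> complex \<Rightarrow> complex)"
      by (rule vector_space_over_itself.vector_space_axioms)
    show "module sc" "module ((*) :: complex \<Rightarrow> complex \<Rightarrow> complex)"
      by (rule module_axioms, rule vector_space_over_itself.module_axioms)
  qed (simp_all add: phi_add phi_scale)
  moreover have "continuous_on UNIV \<phi>"
    unfolding \<phi>_def
    by (intro continuous_intros continuous_on_compose2[OF cont complex_tvs_continuous_scale[OF tvs]]
        continuous_on_compose2[OF cont continuous_on_id]) auto
  ultimately show ?thesis unfolding dual_space_def \<phi>_def by blast
qed

lemma dominated_linear_graph_over_subspace:
  assumes vs: "vector_space sR" and M: "module.subspace sR M" and y: "y \<notin> M"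
    and nonneg: "\<And>x. 0 \<le> p x" and hom: "\<And>t x. t > 0 \<Longrightarrow> p (sR t x) = t * p x"
    and far: "\<And>m. m \<in> M \<Longrightarrow> 1 \<le> p (m + y)"
  shows "dominated_linear_graph sR p {(m + sR t y, t) | m t. m \<in> M}" (is "dominated_linear_graph sR p ?G")
proof -
  interpret vector_space sR by (rule vs)
  show ?thesis
    unfolding dominated_linear_graph_def
  proof (intro conjI allI impI)
    fix x r s assume "(x, r) \<in> ?G" "(x, s) \<in> ?G"
    then obtain m1 m2 where h: "m1 \<in> M" "m2 \<in> M" "x = m1 + sR r y" "x = m2 + sR s y" by blast
    show "r = s"
    proof (rule ccontr)
      assume ne: "r \<noteq> s"
      have "sR (r - s) y = m2 - m1" using h(3,4) by (simp add: scale_left_diff_distrib algebra_simps)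
      hence "sR (inverse (r - s)) (sR (r - s) y) = sR (inverse (r - s)) (m2 - m1)" by simp
      hence "y = sR (inverse (r - s)) (m2 - m1)" using ne by simp
      thus False using y h(1,2) M by (metis subspace_diff subspace_scale)
    qed
  next
    fix x r z s assume "(x, r) \<in> ?G" "(z, s) \<in> ?G"
    then obtain m1 m2 where h: "m1 \<in> M" "m2 \<in> M" "x = m1 + sR r y" "z = m2 + sR s y" by blast
    have "x + z = (m1 + m2) + sR (r + s) y" using h by (simp add: scale_left_distrib algebra_simps)
    thus "(x + z, r + s) \<in> ?G" using h subspace_add[OF M] by blast
  next
    fix a x r assume "(x, r) \<in> ?G"
    then obtain m where h: "m \<in> M" "x = m + sR r y" by blast
    have "sR a x = sR a m + sR (a * r) y" using h by (simp add: scale_right_distrib)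
    thus "(sR a x, a * r) \<in> ?G" using subspace_scale[OF M h(1)] by blast
  next
    fix x r assume "(x, r) \<in> ?G"
    then obtain m where h: "m \<in> M" "x = m + sR r y" by blast
    show "r \<le> p x"
    proof (cases "r \<le> 0")
      case True thus ?thesis using nonneg[of x] by linarith
    next
      case False
      hence r: "r > 0" by simp
      have "x = sR r (sR (inverse r) m + y)" using h r by (simp add: scale_right_distrib)
      hence "p x = r * p (sR (inverse r) m + y)" using hom[OF r] by simp
      moreover have "1 \<le> p (sR (inverse r) m + y)" using far subspace_scale[OF M h(1)] by blast
      ultimately show ?thesis using r by simp
    qed
  qed
qed

lemma locally_convex_nhd_avoiding_subspace:
  fixes sc :: "complex \<Rightarrow> 'b \<Rightarrow> 'b::{ab_group_add,topological_space}"
  assumes tvs: "complex_tvs sc" and lc: "locally_convex sc"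
    and M: "module.subspace sc M" and y: "y \<notin> closure M"
  obtains V where "open V" "convex_c sc V" "0 \<in> V" "\<And>m. m \<in> M \<Longrightarrow> m + y \<notin> V"
proof -
  interpret vector_space sc using tvs by (rule complex_tvs_vector_space)
  obtain U' where U': "open U'" "y \<in> U'" "U' \<inter> M = {}"
    using y unfolding closure_iff_nhds_not_empty by blast
  define U where "U = (\<lambda>z. y + sc (-1) z) -` U'"
  have "open U" unfolding U_def by (rule open_vimage[OF U'(1) complex_tvs_continuous_affine[OF tvs]])
  moreover have "0 \<in> U" using U' by (simp add: U_def)
  ultimately obtain V where V: "open V" "convex_c sc V" "0 \<in> V" "V \<subseteq> U"
    using lc unfolding locally_convex_def by blast
  have "m + y \<notin> V" if m: "m \<in> M" for m
  proof
    assume "m + y \<in> V"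
    hence "y + sc (-1) (m + y) \<in> U'" using V(4) unfolding U_def by auto
    moreover have "y + sc (-1) (m + y) = - m" by (simp add: scale_right_distrib)
    moreover have "- m \<in> M" using subspace_neg[OF M m] .
    ultimately show False using U'(3) by auto
  qed
  with V(1-3) show ?thesis by (rule that)
qed

lemma separating_real_functional:
  fixes sc :: "complex \<Rightarrow> 'b \<Rightarrow> 'b::{ab_group_add,topological_space}"
  assumes tvs: "complex_tvs sc" and lc: "locally_convex sc"
    and M: "module.subspace sc M" and y: "y \<notin> closure M"
  obtains \<psi> where "\<And>x z. \<psi> (x + z) = \<psi> x + \<psi> z"
    "\<And>a x. \<psi> (sc (complex_of_real a) x) = a * \<psi> x"
    "continuous_on UNIV \<psi>" "\<And>m. m \<in> M \<Longrightarrow> \<psi> m = 0" "\<psi> y = 1"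
proof -
  interpret vector_space sc using tvs by (rule complex_tvs_vector_space)
  define sR where "sR r = sc (complex_of_real r)" for r
  have vsR: "vector_space sR"
    unfolding sR_def by (rule vector_space_real_scale) unfold_locales
  obtain V where V: "open V" "convex_c sc V" "0 \<in> V" and avoid: "\<And>m. m \<in> M \<Longrightarrow> m + y \<notin> V"
    using locally_convex_nhd_avoiding_subspace[OF tvs lc M y] by blast
  interpret V: convex_absorbing sR V
  proof (rule convex_absorbing.intro[OF vsR], unfold_locales)
    show "sR (1 - t) x + sR t z \<in> V" if "x \<in> V" "z \<in> V" "0 \<le> t" "t \<le> 1" for x z t
      using V(2)[unfolded convex_c_def] that unfolding sR_def by simp
    show "0 \<in> V" by (rule V(3))
    show "\<exists>t>0. sR t z \<in> V" for z
      unfolding sR_def using complex_tvs_open_absorbing[OF tvs V(1,3)] .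
  qed
  have MR: "module.subspace sR M"
    unfolding module.subspace_def[OF vsR[folded module_iff_vector_space]] sR_def
    using subspace_0[OF M] subspace_add[OF M] subspace_scale[OF M] by simp
  have "y \<notin> M" using y closure_subset by blast
  moreover have "1 \<le> V.gauge (m + y)" if "m \<in> M" for m
    using V.mem_if_gauge_less_one avoid[OF that] by force
  ultimately have G0: "dominated_linear_graph sR V.gauge {(m + sR t y, t) | m t. m \<in> M}"
    by (intro dominated_linear_graph_over_subspace[OF vsR MR] V.gauge_nonneg V.gauge_pos_homogeneous)
  have in_G0: "(m + sR t y, t) \<in> {(m + sR t y, t) | m t. m \<in> M}" if "m \<in> M" for m t
    using that by blast
  hence ne: "{(m + sR t y, t) | m t. m \<in> M} \<noteq> {}" using subspace_0[OF M] by blast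
  obtain \<psi> where add: "\<And>x z. \<psi> (x + z) = \<psi> x + \<psi> z" and scale: "\<And>a x. \<psi> (sR a x) = a * \<psi> x"
    and bound: "\<And>x. \<psi> x \<le> V.gauge x"
    and ext: "\<And>x r. (x, r) \<in> {(m + sR t y, t) | m t. m \<in> M} \<Longrightarrow> \<psi> x = r"
    using Hahn_Banach_graph[OF vsR V.gauge_subadditive V.gauge_pos_homogeneous G0 ne] by blast
  show ?thesis
  proof (rule that)
    show "\<psi> (x + z) = \<psi> x + \<psi> z" for x z by (rule add)
    show scale': "\<psi> (sc (complex_of_real a) x) = a * \<psi> x" for a x
      using scale[of a x] unfolding sR_def .
    have "\<psi> w \<le> 1" if "w \<in> V" for w using bound[of w] V.gauge_le_one[OF that] by linarith
    thus "continuous_on UNIV \<psi>" by (rule real_linear_functional_continuous[OF tvs add scale' V(1,3)])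
    show "\<psi> m = 0" if "m \<in> M" for m
      using ext[OF in_G0[OF that, of 0]] by (simp add: sR_def)
    show "\<psi> y = 1"
      using ext[OF in_G0[OF subspace_0[OF M], of 1]] by (simp add: sR_def)
  qed
qed

lemma separating_functional:
  fixes sc :: "complex \<Rightarrow> 'b \<Rightarrow> 'b::{ab_group_add,topological_space}"
  assumes tvs: "complex_tvs sc" and lc: "locally_convex sc"
    and M: "module.subspace sc M" and y: "y \<notin> closure M"
  obtains \<phi> where "\<phi> \<in> dual_space sc" "\<And>m. m \<in> M \<Longrightarrow> \<phi> m = 0" "\<phi> y \<noteq> 0"
proof -
  interpret vector_space sc using tvs by (rule complex_tvs_vector_space)
  obtain \<psi> where add: "\<And>x z. \<psi> (x + z) = \<psi> x + \<psi> z"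
    and scale: "\<And>a x. \<psi> (sc (complex_of_real a) x) = a * \<psi> x"
    and cont: "continuous_on UNIV \<psi>" and M0: "\<And>m. m \<in> M \<Longrightarrow> \<psi> m = 0" and y1: "\<psi> y = 1"
    using separating_real_functional[OF tvs lc M y] by blast
  show ?thesis
  proof (rule that)
    show "(\<lambda>z. complex_of_real (\<psi> z) - \<i> * complex_of_real (\<psi> (sc \<i> z))) \<in> dual_space sc"
      by (rule complexified_functional_in_dual_space[OF tvs add scale cont])
    show "complex_of_real (\<psi> m) - \<i> * complex_of_real (\<psi> (sc \<i> m)) = 0" if "m \<in> M" for m
      using that M0 subspace_scale[OF M] by simp
    show "complex_of_real (\<psi> y) - \<i> * complex_of_real (\<psi> (sc \<i> y)) \<noteq> 0"
    proof
      assume "complex_of_real (\<psi> y) - \<i> * complex_of_real (\<psi> (sc \<i> y)) = 0"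
      hence "Re (complex_of_real (\<psi> y) - \<i> * complex_of_real (\<psi> (sc \<i> y))) = 0" by simp
      thus False using y1 by simp
    qed
  qed
qed

section \<open>Holomorphy along complex lines and the identity theorem\<close>

definition holomorphic_on_lines :: "(complex \<Rightarrow> 'a \<Rightarrow> 'a::ab_group_add) \<Rightarrow> 'a set \<Rightarrow> ('a \<Rightarrow> complex) \<Rightarrow> bool" where
  "holomorphic_on_lines sX \<Omega> h \<longleftrightarrow>
     (\<forall>a\<in>\<Omega>. \<forall>v. \<exists>r>0. (\<forall>w\<in>ball 0 r. a + sX w v \<in> \<Omega>) \<and> (\<lambda>w. h (a + sX w v)) holomorphic_on ball 0 r)"

definition vanishes_near_along :: "(complex \<Rightarrow> 'a \<Rightarrow> 'a::ab_group_add) \<Rightarrow> ('a \<Rightarrow> complex) \<Rightarrow> 'a \<Rightarrow> 'a \<Rightarrow> bool" where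
  "vanishes_near_along sX h x v \<longleftrightarrow> (\<exists>r>0. \<forall>w. norm w < r \<longrightarrow> h (x + sX w v) = 0)"

lemma vanishes_near_along_scale:
  assumes "vector_space sX" "vanishes_near_along sX h x u"
  shows "vanishes_near_along sX h x (sX a u)"
proof -
  interpret vector_space sX by fact
  obtain r where r: "r > 0" "\<And>w. norm w < r \<Longrightarrow> h (x + sX w u) = 0"
    using assms(2) unfolding vanishes_near_along_def by blast
  have "h (x + sX w (sX a u)) = 0" if "norm w < r / (norm a + 1)" for w
  proof -
    have "norm (w * a) \<le> r / (norm a + 1) * norm a"
      using mult_right_mono[OF less_imp_le[OF that] norm_ge_zero[of a]] by (simp add: norm_mult)
    also have "\<dots> = r * (norm a / (norm a + 1))" by simp
    also have "\<dots> < r * 1"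
      using r(1) by (intro mult_strict_left_mono) (simp_all add: divide_less_eq add_nonneg_pos)
    finally show ?thesis using r(2) by simp
  qed
  moreover have "r / (norm a + 1) > 0" using r(1) by (simp add: add_nonneg_pos)
  ultimately show ?thesis unfolding vanishes_near_along_def by blast
qed

lemma vanishes_near_along_zero:
  assumes "vector_space sX" "vanishes_near_along sX h x v"
  shows "h x = 0"
proof -
  interpret vector_space sX by fact
  obtain r where r: "r > 0" "\<And>w. norm w < r \<Longrightarrow> h (x + sX w v) = 0"
    using assms(2) unfolding vanishes_near_along_def by blast
  have "h (x + sX 0 v) = 0" by (rule r(2)) (simp add: r(1))
  thus ?thesis by simp
qed

lemma holomorphic_on_lines_restrict_line:
  assumes vs: "vector_space sX" and hol: "holomorphic_on_lines sX \<Omega> h"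
  shows "open {w. x + sX w u \<in> \<Omega>}" and "(\<lambda>w. h (x + sX w u)) holomorphic_on {w. x + sX w u \<in> \<Omega>}"
proof -
  interpret vector_space sX by (rule vs)
  have local: "\<exists>r>0. ball w0 r \<subseteq> {w. x + sX w u \<in> \<Omega>} \<and> (\<lambda>w. h (x + sX w u)) field_differentiable at w0"
    if w0: "x + sX w0 u \<in> \<Omega>" for w0
  proof -
    obtain r where r: "r > 0" "\<forall>w\<in>ball 0 r. (x + sX w0 u) + sX w u \<in> \<Omega>"
      "(\<lambda>w. h ((x + sX w0 u) + sX w u)) holomorphic_on ball 0 r"
      using hol w0 unfolding holomorphic_on_lines_def by blast
    have shift: "(x + sX w0 u) + sX (w - w0) u = x + sX w u" for w
      by (simp add: scale_left_diff_distrib)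
    have "ball w0 r \<subseteq> {w. x + sX w u \<in> \<Omega>}"
    proof
      fix w assume "w \<in> ball w0 r"
      hence "w - w0 \<in> ball 0 r" by (simp add: dist_norm norm_minus_commute)
      hence "(x + sX w0 u) + sX (w - w0) u \<in> \<Omega>" using r(2) by blast
      thus "w \<in> {w. x + sX w u \<in> \<Omega>}" unfolding shift by simp
    qed
    moreover have "(\<lambda>w. h ((x + sX w0 u) + sX w u)) field_differentiable at 0"
      using r(1,3) by (intro holomorphic_on_imp_differentiable_at[of _ "ball 0 r"]) simp_all
    hence "((\<lambda>w. h ((x + sX w0 u) + sX w u)) \<circ> (\<lambda>w. w - w0)) field_differentiable at w0"
      by (intro field_differentiable_compose field_differentiable_diff) simp_all
    hence "(\<lambda>w. h (x + sX w u)) field_differentiable at w0"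
      unfolding o_def shift .
    ultimately show ?thesis using r(1) by blast
  qed
  show "open {w. x + sX w u \<in> \<Omega>}" unfolding open_contains_ball using local by blast
  thus "(\<lambda>w. h (x + sX w u)) holomorphic_on {w. x + sX w u \<in> \<Omega>}"
    unfolding holomorphic_on_def using local by (blast intro: field_differentiable_at_within)
qed

text \<open>One-variable analytic continuation along the segment \<open>[0, 1]\<close> of the line \<open>w \<mapsto> x + w u\<close>,
  inside the connected component of its preimage of \<open>\<Omega>\<close> that contains the segment.\<close>
lemma vanishes_near_along_segment:
  assumes vs: "vector_space sX" and hol: "holomorphic_on_lines sX \<Omega> h"
    and x: "vanishes_near_along sX h x u"
    and seg: "\<And>t. t \<in> {0..1} \<Longrightarrow> x + sX (complex_of_real t) u \<in> \<Omega>"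
  shows "vanishes_near_along sX h (x + u) u"
proof -
  interpret vector_space sX by (rule vs)
  define U where "U = {w. x + sX w u \<in> \<Omega>}"
  define S where "S = connected_component_set U 0"
  note U = holomorphic_on_lines_restrict_line[OF vs hol, of x u, folded U_def]
  obtain \<rho> where \<rho>: "\<rho> > 0" "\<And>w. norm w < \<rho> \<Longrightarrow> h (x + sX w u) = 0"
    using x unfolding vanishes_near_along_def by blast
  have "0 \<in> U" unfolding U_def using seg[of 0] by simp
  hence S0: "0 \<in> S" unfolding S_def by simp
  have openS: "open S" unfolding S_def using U(1) by (rule open_connected_component)
  have SU: "S \<subseteq> U" unfolding S_def by (rule connected_component_subset)
  obtain e0 where e0: "e0 > 0" "ball 0 e0 \<subseteq> S" using openS S0 open_contains_ball by blast
  have zero_on_S: "h (x + sX w u) = 0" if "w \<in> S" for w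
  proof (rule analytic_continuation[of "\<lambda>w. h (x + sX w u)" S "ball 0 (min e0 \<rho>)" 0])
    show "(\<lambda>w. h (x + sX w u)) holomorphic_on S" using U(2) SU by (rule holomorphic_on_subset)
    show "open S" "connected S" "0 \<in> S" "w \<in> S" using openS S0 that unfolding S_def by auto
    show "ball 0 (min e0 \<rho>) \<subseteq> S" using e0 by auto
    show "0 islimpt ball (0::complex) (min e0 \<rho>)" using e0 \<rho> by (subst islimpt_ball) auto
    show "h (x + sX z u) = 0" if "z \<in> ball 0 (min e0 \<rho>)" for z
      using that \<rho>(2) by simp
  qed
  have "complex_of_real ` {0..1} \<subseteq> S"
    unfolding S_def
  proof (rule connected_component_maximal)
    show "connected (complex_of_real ` {0..1})"
      by (intro connected_continuous_image continuous_intros) auto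
    show "complex_of_real ` {0..1} \<subseteq> U" using seg unfolding U_def by auto
    show "0 \<in> complex_of_real ` {0..1}" by (rule image_eqI[of _ _ 0]) simp_all
  qed
  moreover have "complex_of_real 1 \<in> complex_of_real ` {0..1}" by (rule imageI) simp
  ultimately have "1 \<in> S" by auto
  then obtain r where r: "r > 0" "ball 1 r \<subseteq> S" using openS open_contains_ball by blast
  have "h ((x + u) + sX w u) = 0" if "norm w < r" for w
  proof -
    have "1 + w \<in> S" using r(2) that by (auto simp: dist_norm)
    moreover have "(x + u) + sX w u = x + sX (1 + w) u" by (simp add: scale_left_distrib add.assoc)
    ultimately show ?thesis using zero_on_S by (simp only:)
  qed
  thus ?thesis unfolding vanishes_near_along_def using r(1) by blast
qed

lemma zero_islimpt_of_real_Ioc: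
  assumes "\<delta> > 0"
  shows "(0::complex) islimpt complex_of_real ` {0<..\<delta>}"
  unfolding islimpt_approachable
proof (intro allI impI)
  fix e :: real assume "e > 0"
  define t where "t = min \<delta> (e / 2)"
  have t: "0 < t" "t \<le> \<delta>" "t < e" using assms \<open>e > 0\<close> unfolding t_def by auto
  hence "complex_of_real t \<in> complex_of_real ` {0<..\<delta>}" by simp
  moreover have "complex_of_real t \<noteq> 0" "dist (complex_of_real t) 0 < e" using t by simp_all
  ultimately show "\<exists>x'\<in>complex_of_real ` {0<..\<delta>}. x' \<noteq> 0 \<and> dist x' 0 < e" by blast
qed

text \<open>The real segments \<open>[0, \<epsilon>] v\<close> lie in \<open>C - c\<close>, and they accumulate at \<open>0\<close>.\<close>
lemma vanishes_near_along_real_absorbing: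
  assumes vs: "vector_space sX" and hol: "holomorphic_on_lines sX \<Omega> h" and c: "c \<in> \<Omega>"
    and ra: "real_absorbing sX ((\<lambda>x. x - c) ` C)" and hC: "\<And>x. x \<in> C \<Longrightarrow> h x = 0"
  shows "vanishes_near_along sX h c v"
proof -
  interpret vector_space sX by (rule vs)
  obtain \<epsilon> where \<epsilon>: "\<epsilon> > 0" "\<forall>t\<in>{0..\<epsilon>}. sX (complex_of_real t) v \<in> (\<lambda>x. x - c) ` C"
    using ra unfolding real_absorbing_def by blast
  have on_segment: "h (c + sX (complex_of_real t) v) = 0" if "t \<in> {0..\<epsilon>}" for t
  proof -
    have "sX (complex_of_real t) v \<in> (\<lambda>x. x - c) ` C" using \<epsilon>(2) that by (rule bspec)
    then obtain x where "x \<in> C" "sX (complex_of_real t) v = x - c" by (rule imageE)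
    hence "c + sX (complex_of_real t) v = x" "h x = 0" using hC by simp_all
    thus ?thesis by simp
  qed
  obtain r where r: "r > 0" "(\<lambda>w. h (c + sX w v)) holomorphic_on ball 0 r"
    using hol c unfolding holomorphic_on_lines_def by blast
  define \<delta> where "\<delta> = min \<epsilon> (r / 2)"
  have \<delta>: "\<delta> > 0" "\<delta> < r" "\<delta> \<le> \<epsilon>" using \<epsilon>(1) r(1) unfolding \<delta>_def by auto
  have "h (c + sX w v) = 0" if w: "norm w < r" for w
  proof (rule analytic_continuation[of "\<lambda>w. h (c + sX w v)" "ball 0 r" "complex_of_real ` {0<..\<delta>}" 0])
    show "(\<lambda>w. h (c + sX w v)) holomorphic_on ball 0 r" by (rule r(2))
    show "open (ball (0::complex) r)" "connected (ball (0::complex) r)" by simp_all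
    show "0 \<in> ball (0::complex) r" "w \<in> ball 0 r" using r(1) w by simp_all
    show "complex_of_real ` {0<..\<delta>} \<subseteq> ball 0 r"
    proof
      fix z assume "z \<in> complex_of_real ` {0<..\<delta>}"
      then obtain t where "t \<in> {0<..\<delta>}" "z = complex_of_real t" by blast
      thus "z \<in> ball 0 r" using \<delta>(2) by simp
    qed
    show "0 islimpt complex_of_real ` {0<..\<delta>}" using \<delta>(1) by (rule zero_islimpt_of_real_Ioc)
    show "h (c + sX z v) = 0" if z: "z \<in> complex_of_real ` {0<..\<delta>}" for z
    proof -
      obtain t where t: "t \<in> {0<..\<delta>}" "z = complex_of_real t" using z by blast
      hence "t \<in> {0..\<epsilon>}" using \<delta>(3) by simp
      thus ?thesis unfolding t(2) by (rule on_segment)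
    qed
  qed
  thus ?thesis unfolding vanishes_near_along_def using r(1) by blast
qed

lemma d_open_plane_open:
  assumes \<Omega>: "d_open sX 2 \<Omega>"
    and indep: "\<not> module.dependent sX {u, v}" "u \<noteq> v"
  shows "open {p. x + sX (fst p) u + sX (snd p) v \<in> \<Omega>}"
proof -
  define basis where "basis i = (if i = 0 then u else v)" for i :: nat
  have two: "{..<(2::nat)} = {0, 1}" by auto
  have frame: "is_frame sX 2 basis"
    unfolding is_frame_def two basis_def using indep by (auto simp: inj_on_def insert_commute)
  hence "aff_param sX 2 x basis ` coord_space 2 \<in> Gamma sX 2" unfolding Gamma_def by blast
  hence "open_in_affine sX 2 (aff_param sX 2 x basis ` coord_space 2) \<Omega>"
    using \<Omega> unfolding d_open_def by simp
  hence "openin (top_of_set (coord_space 2)) {z \<in> coord_space 2. aff_param sX 2 x basis z \<in> \<Omega>}"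
    using frame unfolding open_in_affine_def by blast
  then obtain T where T: "open T" "{z \<in> coord_space 2. aff_param sX 2 x basis z \<in> \<Omega>} = coord_space 2 \<inter> T"
    unfolding openin_open by blast
  define embed where "embed p = (\<lambda>i::nat. if i = 0 then fst p else if i = 1 then snd p else 0)"
    for p :: "complex \<times> complex"
  have embed: "embed p \<in> coord_space 2" "aff_param sX 2 x basis (embed p) = x + sX (fst p) u + sX (snd p) v" for p
    unfolding aff_param_def two embed_def basis_def coord_space_def by (simp_all add: add.assoc)
  have "continuous_on UNIV embed"
  proof (rule continuous_on_coordinatewise_then_product)
    fix i :: nat
    show "continuous_on UNIV (\<lambda>p. embed p i)"
    proof -
      consider "i = 0" | "i = 1" | "i \<noteq> 0 \<and> i \<noteq> 1" by blast
      thus ?thesis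
        by cases (simp_all add: embed_def continuous_on_fst continuous_on_snd)
    qed
  qed
  moreover have "{p. x + sX (fst p) u + sX (snd p) v \<in> \<Omega>} = embed -` T"
  proof (intro set_eqI iffI)
    fix p assume "p \<in> {p. x + sX (fst p) u + sX (snd p) v \<in> \<Omega>}"
    hence "embed p \<in> {z \<in> coord_space 2. aff_param sX 2 x basis z \<in> \<Omega>}" using embed[of p] by simp
    thus "p \<in> embed -` T" using T(2) by blast
  next
    fix p assume "p \<in> embed -` T"
    hence "embed p \<in> {z \<in> coord_space 2. aff_param sX 2 x basis z \<in> \<Omega>}" using T(2) embed(1)[of p] by blast
    thus "p \<in> {p. x + sX (fst p) u + sX (snd p) v \<in> \<Omega>}" using embed(2)[of p] by simp
  qed
  ultimately show ?thesis using open_vimage[OF T(1)] by simp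
qed

lemma open_contains_tube_segment:
  fixes Q :: "(complex \<times> complex) set"
  assumes Q: "open Q" and seg: "\<And>t. t \<in> {0..1} \<Longrightarrow> (complex_of_real t, 0) \<in> Q"
  obtains \<epsilon> where "\<epsilon> > 0" "\<And>t b. t \<in> {0..1} \<Longrightarrow> norm b < \<epsilon> \<Longrightarrow> (complex_of_real t, b) \<in> Q"
proof -
  define K where "K = (\<lambda>t. (complex_of_real t, 0::complex)) ` {0..1}"
  have "compact K" unfolding K_def by (intro compact_continuous_image continuous_intros) auto
  moreover have "K \<subseteq> \<Union>{Q}" unfolding K_def using seg by auto
  ultimately obtain \<epsilon> where \<epsilon>: "\<epsilon> > 0" "\<And>k. k \<in> K \<Longrightarrow> \<exists>G\<in>{Q}. ball k \<epsilon> \<subseteq> G"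
    using Heine_Borel_lemma Q by blast
  have "(complex_of_real t, b) \<in> Q" if t: "t \<in> {0..1}" and b: "norm b < \<epsilon>" for t b
  proof -
    have "(complex_of_real t, 0) \<in> K" unfolding K_def using t by blast
    moreover have "dist (complex_of_real t, 0) (complex_of_real t, b) < \<epsilon>"
      using b by (simp add: dist_Pair_Pair dist_norm)
    ultimately show ?thesis using \<epsilon>(2) by fastforce
  qed
  with \<epsilon>(1) show ?thesis by (rule that)
qed

lemma vanishes_near_in_plane:
  assumes vs: "vector_space sX" and hol: "holomorphic_on_lines sX \<Omega> h"
    and x: "\<And>d. vanishes_near_along sX h x d"
    and \<delta>: "ball (0, 0) \<delta> \<subseteq> {p. x + sX (fst p) u + sX (snd p) v \<in> \<Omega>}"
    and ab: "norm a < \<delta> / 2" "norm b < \<delta> / 2"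
  shows "h (x + sX a u + sX b v) = 0"
proof -
  interpret vector_space sX by (rule vs)
  define d where "d = sX a u + sX b v"
  have "x + sX (complex_of_real t) d \<in> \<Omega>" if t: "t \<in> {0..1}" for t
  proof -
    have "norm (complex_of_real t) \<le> 1" using t by simp
    hence "norm (complex_of_real t * a) \<le> norm a" "norm (complex_of_real t * b) \<le> norm b"
      by (simp_all add: norm_mult mult_left_le_one_le)
    moreover have "dist (complex_of_real t * a, complex_of_real t * b) (0, 0)
        \<le> norm (complex_of_real t * a) + norm (complex_of_real t * b)"
      using sqrt_sum_squares_le_sum[of "norm (complex_of_real t * a)" "norm (complex_of_real t * b)"]
      by (simp add: dist_Pair_Pair)
    ultimately have "(complex_of_real t * a, complex_of_real t * b) \<in> ball (0, 0) \<delta>"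
      using ab by (simp add: dist_commute)
    from subsetD[OF \<delta> this]
    have "x + sX (complex_of_real t * a) u + sX (complex_of_real t * b) v \<in> \<Omega>" by simp
    moreover have "x + sX (complex_of_real t) d
        = x + sX (complex_of_real t * a) u + sX (complex_of_real t * b) v"
      unfolding d_def by (simp add: scale_right_distrib add.assoc)
    ultimately show ?thesis by (simp only:)
  qed
  hence "vanishes_near_along sX h (x + d) d"
    using vanishes_near_along_segment[OF vs hol x] by blast
  hence "h (x + d) = 0" by (rule vanishes_near_along_zero[OF vs])
  thus ?thesis unfolding d_def by (simp add: add.assoc)
qed

text \<open>Propagation in a direction \<open>v\<close> transversal to the segment: in the complex plane through
  \<open>x\<close> spanned by \<open>u\<close> and \<open>v\<close>, \<open>h\<close> vanishes near \<open>x\<close>, and each parallel segment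
  \<open>[x + b v, x + b v + u]\<close> with small \<open>b\<close> carries this along to \<open>x + u + b v\<close>.\<close>
lemma vanishes_near_along_transversal:
  assumes vs: "vector_space sX" and hol: "holomorphic_on_lines sX \<Omega> h" and \<Omega>: "d_open sX 2 \<Omega>"
    and x: "\<And>d. vanishes_near_along sX h x d"
    and seg: "\<And>t. t \<in> {0..1} \<Longrightarrow> x + sX (complex_of_real t) u \<in> \<Omega>"
    and indep: "\<not> module.dependent sX {u, v}" "u \<noteq> v"
  shows "vanishes_near_along sX h (x + u) v"
proof -
  interpret vector_space sX by (rule vs)
  define Q where "Q = {p. x + sX (fst p) u + sX (snd p) v \<in> \<Omega>}"
  have "open Q" unfolding Q_def by (rule d_open_plane_open[OF \<Omega> indep])
  moreover have "(0, 0) \<in> Q" unfolding Q_def using seg[of 0] by simp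
  ultimately obtain \<delta> where \<delta>: "\<delta> > 0" "ball (0, 0) \<delta> \<subseteq> Q" using open_contains_ball by blast
  obtain \<epsilon> where \<epsilon>: "\<epsilon> > 0" "\<And>t b. t \<in> {0..1} \<Longrightarrow> norm b < \<epsilon> \<Longrightarrow> (complex_of_real t, b) \<in> Q"
    using open_contains_tube_segment[OF \<open>open Q\<close>] seg unfolding Q_def by auto
  have "h ((x + u) + sX b v) = 0" if b: "norm b < min \<epsilon> (\<delta> / 2)" for b
  proof -
    have seg_b: "(x + sX b v) + sX (complex_of_real t) u \<in> \<Omega>" if "t \<in> {0..1}" for t
      using \<epsilon>(2)[OF that, of b] b unfolding Q_def by (simp add: add_ac)
    have "h ((x + sX b v) + sX w u) = 0" if "norm w < \<delta> / 2" for w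
      using vanishes_near_in_plane[OF vs hol x \<delta>(2)[unfolded Q_def], of w b] that b by (simp add: add_ac)
    hence "vanishes_near_along sX h (x + sX b v) u"
      unfolding vanishes_near_along_def using \<delta>(1) by (intro exI[of _ "\<delta> / 2"]) simp
    hence "vanishes_near_along sX h ((x + sX b v) + u) u"
      using vanishes_near_along_segment[OF vs hol _ seg_b] by blast
    hence "h ((x + sX b v) + u) = 0" by (rule vanishes_near_along_zero[OF vs])
    thus ?thesis by (simp add: add_ac)
  qed
  moreover have "min \<epsilon> (\<delta> / 2) > 0" using \<epsilon>(1) \<delta>(1) by simp
  ultimately show ?thesis unfolding vanishes_near_along_def by blast
qed

lemma vanishes_near_along_segment_step:
  assumes vs: "vector_space sX" and hol: "holomorphic_on_lines sX \<Omega> h" and \<Omega>: "d_open sX 2 \<Omega>"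
    and x: "\<And>d. vanishes_near_along sX h x d" and seg: "segm sX x y \<subseteq> \<Omega>"
  shows "vanishes_near_along sX h y v"
proof -
  interpret vector_space sX by (rule vs)
  define u where "u = y - x"
  have y: "y = x + u" unfolding u_def by simp
  have seg': "x + sX (complex_of_real t) u \<in> \<Omega>" if "t \<in> {0..1}" for t
    using seg that unfolding segm_def u_def by blast
  consider "u = 0" | "v \<in> span {u}" | "u \<noteq> 0" "v \<notin> span {u}" by blast
  thus ?thesis
  proof cases
    case 1
    hence "y = x" using y by simp
    thus ?thesis using x by simp
  next
    case 2
    then obtain a where v: "v = sX a u" by (auto simp: span_singleton)
    show ?thesis unfolding y v
      by (rule vanishes_near_along_scale[OF vs vanishes_near_along_segment[OF vs hol x seg']])
  next
    case 3
    have "independent {u}" using 3(1) by simp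
    hence "independent (insert v {u})" using 3(2) by (rule independent_insertI[rotated])
    also have "insert v {u} = {u, v}" by blast
    finally have indep: "\<not> dependent {u, v}" .
    have "u \<noteq> v"
    proof
      assume "u = v"
      hence "v \<in> span {u}" using span_base[of u "{u}"] by simp
      thus False using 3(2) by contradiction
    qed
    with indep show ?thesis
      unfolding y using vanishes_near_along_transversal[OF vs hol \<Omega> x seg'] by blast
  qed
qed

lemma polygonally_connected_induct:
  assumes pc: "polygonally_connected sX A" and ab: "a \<in> A" "b \<in> A" and Pa: "P a"
    and step: "\<And>x y. P x \<Longrightarrow> segm sX x y \<subseteq> A \<Longrightarrow> P y"
  shows "P b"
proof -
  obtain ps where ps: "ps \<noteq> []" "hd ps = a" "last ps = b"
    "\<And>i. Suc i < length ps \<Longrightarrow> segm sX (ps ! i) (ps ! Suc i) \<subseteq> A"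
    using pc ab unfolding polygonally_connected_def by blast
  have "P (ps ! i)" if "i < length ps" for i
    using that
  proof (induction i)
    case 0 thus ?case using Pa ps(1,2) by (simp add: hd_conv_nth)
  next
    case (Suc i)
    hence "P (ps ! i)" "segm sX (ps ! i) (ps ! Suc i) \<subseteq> A" using ps(4) by simp_all
    thus ?case by (rule step)
  qed
  hence "P (ps ! (length ps - 1))" using ps(1) by simp
  thus ?thesis using ps(1,3) by (simp add: last_conv_nth)
qed

theorem holomorphic_on_lines_identity:
  assumes vs: "vector_space sX" and hol: "holomorphic_on_lines sX \<Omega> h"
    and \<Omega>: "d_open sX 2 \<Omega>" "polygonally_connected sX \<Omega>"
    and C: "C \<subseteq> \<Omega>" "c \<in> C" "real_absorbing sX ((\<lambda>x. x - c) ` C)"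
    and hC: "\<And>x. x \<in> C \<Longrightarrow> h x = 0" and x: "x \<in> \<Omega>"
  shows "h x = 0"
proof -
  have "c \<in> \<Omega>" using C by blast
  hence "\<forall>v. vanishes_near_along sX h c v"
    using vanishes_near_along_real_absorbing[OF vs hol _ C(3) hC] by blast
  hence "\<forall>v. vanishes_near_along sX h x v"
  proof (rule polygonally_connected_induct[OF \<Omega>(2) \<open>c \<in> \<Omega>\<close> x])
    show "\<forall>v. vanishes_near_along sX h z v"
      if "\<forall>v. vanishes_near_along sX h y v" "segm sX y z \<subseteq> \<Omega>" for y z
      using vanishes_near_along_segment_step[OF vs hol \<Omega>(1)] that by blast
  qed
  thus ?thesis using vanishes_near_along_zero[OF vs] by blast
qed

lemma gateaux_holomorphic_dual_comp:
  assumes "gateaux_holomorphic sX sY \<Omega> f" "\<phi> \<in> dual_space sY"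
  shows "holomorphic_on_lines sX \<Omega> (\<lambda>x. \<phi> (f x) - k)"
  unfolding holomorphic_on_lines_def
proof (intro ballI allI)
  fix a v assume "a \<in> \<Omega>"
  then obtain r where "r > 0" "\<forall>w\<in>ball 0 r. a + sX w v \<in> \<Omega>"
    "(\<lambda>w. \<phi> (f (a + sX w v))) holomorphic_on ball 0 r"
    using assms unfolding gateaux_holomorphic_def by blast
  thus "\<exists>r>0. (\<forall>w\<in>ball 0 r. a + sX w v \<in> \<Omega>) \<and> (\<lambda>w. \<phi> (f (a + sX w v)) - k) holomorphic_on ball 0 r"
    by (intro exI[of _ r]) (simp add: holomorphic_on_diff)
qed

lemma gateaux_holomorphic_in_closed_span:
  fixes scaleY :: "complex \<Rightarrow> 'b \<Rightarrow> 'b::{ab_group_add,topological_space}"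
  assumes X: "vector_space scaleX" and Y: "complex_tvs scaleY" "locally_convex scaleY"
    and \<Omega>: "d_open scaleX 2 \<Omega>" "polygonally_connected scaleX \<Omega>"
    and C: "C \<subseteq> \<Omega>" "c \<in> C" "real_absorbing scaleX ((\<lambda>x. x - c) ` C)"
    and f: "gateaux_holomorphic scaleX scaleY \<Omega> f" and x: "x \<in> \<Omega>"
  shows "f x - f c \<in> closure (module.span scaleY ((\<lambda>x. f x - f c) ` C))"
proof (rule ccontr)
  interpret vector_space scaleY using Y(1) by (rule complex_tvs_vector_space)
  assume "f x - f c \<notin> closure (span ((\<lambda>x. f x - f c) ` C))"
  then obtain \<phi> where \<phi>: "\<phi> \<in> dual_space scaleY" "\<And>m. m \<in> span ((\<lambda>x. f x - f c) ` C) \<Longrightarrow> \<phi> m = 0"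
      "\<phi> (f x - f c) \<noteq> 0"
    using separating_functional[OF Y subspace_span] by blast
  have diff: "\<phi> (a - b) = \<phi> a - \<phi> b" for a b
    using \<phi>(1) unfolding dual_space_def by (auto simp: linear_iff_module_hom intro: module_hom.diff)
  have "\<phi> (f z) - \<phi> (f c) = 0" if "z \<in> C" for z
    using \<phi>(2)[OF span_base] that unfolding diff[symmetric] by blast
  hence "\<phi> (f x) - \<phi> (f c) = 0"
    using holomorphic_on_lines_identity[OF X gateaux_holomorphic_dual_comp[OF f \<phi>(1)] \<Omega> C] x by blast
  thus False using \<phi>(3) diff by simp
qed

theorem mainTheorem4:
  fixes scaleX :: "complex \<Rightarrow> 'a \<Rightarrow> 'a::ab_group_add"
    and scaleY :: "complex \<Rightarrow> 'b \<Rightarrow> 'b::{ab_group_add,t2_space}"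
    and \<Omega> C :: "'a set" and c :: 'a and f :: "'a \<Rightarrow> 'b"
  assumes X: "vector_space scaleX"
    and dimX: "\<exists>x y. x \<noteq> y \<and> \<not> module.dependent scaleX {x, y}"
    and Y: "complex_tvs scaleY" "locally_convex scaleY" "sequentially_complete TYPE('b)"
    and Ynz: "\<exists>y::'b. y \<noteq> 0"
    and Om: "d_open scaleX 2 \<Omega>" "polygonally_connected scaleX \<Omega>"
    and C: "C \<subseteq> \<Omega>" "c \<in> C" "real_absorbing scaleX ((\<lambda>x. x - c) ` C)"
    and f: "gateaux_holomorphic scaleX scaleY \<Omega> f"
  shows "(\<lambda>x. f x - f c) ` \<Omega> \<subseteq> closure (module.span scaleY ((\<lambda>x. f x - f c) ` C)) \<and>
         ((\<forall>x\<in>\<Omega>. f x = 0) \<longleftrightarrow> (\<forall>x\<in>C. f x = 0))"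
proof -
  interpret vector_space scaleY using Y(1) by (rule complex_tvs_vector_space)
  have in_span: "f x - f c \<in> closure (span ((\<lambda>x. f x - f c) ` C))" if "x \<in> \<Omega>" for x
    by (rule gateaux_holomorphic_in_closed_span[OF X Y(1,2) Om C f that])
  moreover have "f x = 0" if "x \<in> \<Omega>" "\<forall>x\<in>C. f x = 0" for x
  proof -
    have "f c = 0" and "(\<lambda>x. f x - f c) ` C \<subseteq> {0}" using that(2) C(2) by auto
    hence "closure (span ((\<lambda>x. f x - f c) ` C)) \<subseteq> {0}"
      using closure_mono[OF span_minimal[OF _ subspace_single_0]] by simp
    thus ?thesis using in_span[OF that(1)] \<open>f c = 0\<close> by auto
  qed
  ultimately show ?thesis using C(1) by blast
qed

end
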